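(* Let $C$ be a maximal independent set of the Kneser graph $\Gamma$ of flags of type $\{2,3\}$ of $\mathrm{PG}(6,q)$. (i) Every solid $S$ has a subspace $U$ such that for every plane $E$ of $S$: $(E,S)\in C$ if and only if $U\subseteq E$. (ii) For every plane $E$ there is a subspace $U$ containing $E$ such that for every solid $S$ on $E$: $(E,S)\in C$ if and only if $S\subseteq U$.
   Context: Dimensions are projective (planes 2, solids 3). A flag of type $\{2,3\}$ is a pair $(E,S)$ of a plane $E$ and a solid $S$ with $E\subseteq S$; in $\Gamma$ distinct flags $(E,S),(E',S')$ are adjacent iff $E\cap S'=\emptyset$ and $E'\cap S=\emptyset$. Maximal independent means independent and not properly contained in another independent set. *)

theory Defs
  imports "HOL-Analysis.Analysis"
begin

text \<open>PG(n-1,F) is modelled by the vector space F^n with F a finite field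
 (type 'a) and n = CARD('n). Projective subspaces are linear subspaces;
 projective dimension d corresponds to vector dimension d+1; the empty
 projective subspace is the zero subspace.\<close>

definition psubspace :: "('a::field ^ 'n) set \<Rightarrow> bool" where
  "psubspace U \<longleftrightarrow> vec.subspace U"

definition plane :: "('a::field ^ 'n) set \<Rightarrow> bool" where
  "plane E \<longleftrightarrow> vec.subspace E \<and> vec.dim E = 3"

definition solid :: "('a::field ^ 'n) set \<Rightarrow> bool" where
  "solid S \<longleftrightarrow> vec.subspace S \<and> vec.dim S = 4"

definition flag23 :: "('a::field ^ 'n) set \<times> ('a ^ 'n) set \<Rightarrow> bool" where
  "flag23 F \<longleftrightarrow> plane (fst F) \<and> solid (snd F) \<and> fst F \<subseteq> snd F"

text \<open>Projectively disjoint = trivial intersection of the vector subspaces.\<close>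
definition kneser_adj :: "('a::field ^ 'n) set \<times> ('a ^ 'n) set \<Rightarrow> ('a ^ 'n) set \<times> ('a ^ 'n) set \<Rightarrow> bool" where
  "kneser_adj F F' \<longleftrightarrow> flag23 F \<and> flag23 F' \<and> F \<noteq> F'
     \<and> fst F \<inter> snd F' = {0} \<and> fst F' \<inter> snd F = {0}"

definition independent23 :: "(('a::field ^ 'n) set \<times> ('a ^ 'n) set) set \<Rightarrow> bool" where
  "independent23 C \<longleftrightarrow> (\<forall>F\<in>C. flag23 F) \<and> (\<forall>F\<in>C. \<forall>F'\<in>C. \<not> kneser_adj F F')"

definition max_independent23 :: "(('a::field ^ 'n) set \<times> ('a ^ 'n) set) set \<Rightarrow> bool" where
  "max_independent23 C \<longleftrightarrow> independent23 C \<and> \<not> (\<exists>D. independent23 D \<and> C \<subset> D)"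

end

theory Submission
  imports Defs
begin

text \<open>By maximality, a flag \<open>(E, S)\<close> lies in \<open>C\<close> iff it is adjacent to no member of \<open>C\<close>,
  i.e. iff for every \<open>(E', S') \<in> C\<close> with \<open>E' \<inter> S = 0\<close> the plane \<open>E\<close> meets \<open>S'\<close>.
  For fixed \<open>S\<close>: two solids of \<open>PG(6,q)\<close> always meet, and a plane \<open>E\<close> of \<open>S\<close> meets \<open>S \<inter> S'\<close>
  unless \<open>S \<inter> S'\<close> is a point outside \<open>E\<close>; so membership says that \<open>E\<close> contains a certain
  set of points, and \<open>U\<close> is their span.
  For fixed \<open>E\<close> and \<open>E \<inter> S' = 0\<close>: \<open>E'\<close> meets the solid \<open>S \<supseteq> E\<close> iff \<open>S \<subseteq> \<langle>E, E'\<rangle>\<close>;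
  so membership says that \<open>S\<close> lies in all these 5-spaces, and \<open>U\<close> is their intersection.\<close>

context finite_dimensional_vector_space
begin

lemma subspace_nontrivial_iff:
  assumes "subspace A"
  shows "A \<noteq> {0} \<longleftrightarrow> (\<exists>x\<in>A. x \<noteq> 0)"
  using subspace_0[OF assms] by blast

lemma subspace_Int_nontrivial:
  assumes "subspace A" "subspace B" "subspace X" "A \<subseteq> X" "B \<subseteq> X"
    and "dim X < dim A + dim B"
  shows "A \<inter> B \<noteq> {0}"
proof
  assume trivial: "A \<inter> B = {0}"
  have "{x + y |x y. x \<in> A \<and> y \<in> B} \<subseteq> X"
    using assms(3-5) subspace_add by blast
  then have "dim {x + y |x y. x \<in> A \<and> y \<in> B} \<le> dim X"
    by (rule dim_subset)
  then show False
    using dim_sums_Int[OF assms(1,2)] trivial assms(6) by simp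
qed

lemma hyperplane_Int_nontrivial_iff:
  assumes "subspace S" "subspace E" "subspace W" "E \<subseteq> S" "W \<subseteq> S"
    and "dim S = dim E + 1" and "W \<noteq> {0}"
  shows "E \<inter> W \<noteq> {0} \<longleftrightarrow> (dim W = 1 \<longrightarrow> W \<subseteq> E)"
proof (cases "dim W = 1")
  case False
  have "\<not> W \<subseteq> {0}"
    using assms(3,7) subspace_0 by blast
  then have "dim S < dim E + dim W"
    using False assms(6) by (simp add: dim_eq_0[symmetric] del: dim_eq_0)
  then show ?thesis
    using subspace_Int_nontrivial[OF assms(2,3,1,4,5)] False by simp
next
  case True
  have point: "W = span {y}" if "y \<in> W" "y \<noteq> 0" for y
  proof -
    have "span {y} \<subseteq> W"
      using that assms(3) by (simp add: span_minimal)
    then show ?thesis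
      using subspace_dim_equal[OF subspace_span assms(3), of "{y}"] True that by simp
  qed
  show ?thesis
  proof
    assume "E \<inter> W \<noteq> {0}"
    then obtain y where "y \<in> E" "y \<in> W" "y \<noteq> 0"
      using subspace_nontrivial_iff[OF subspace_inter[OF assms(2,3)]] by blast
    then have "span {y} \<subseteq> E"
      using assms(2) by (simp add: span_minimal)
    then show "dim W = 1 \<longrightarrow> W \<subseteq> E"
      using point[OF \<open>y \<in> W\<close> \<open>y \<noteq> 0\<close>] by simp
  next
    assume "dim W = 1 \<longrightarrow> W \<subseteq> E"
    then show "E \<inter> W \<noteq> {0}"
      using True assms(7) by (simp add: Int_absorb1)
  qed
qed

lemma Int_nontrivial_iff_subset_span_Un:
  assumes "subspace S" "subspace E" "subspace E'" "E \<subseteq> S"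
    and "dim S = dim E + 1" and "E \<inter> E' \<subseteq> {0}"
  shows "E' \<inter> S \<noteq> {0} \<longleftrightarrow> S \<subseteq> span (E \<union> E')"
proof
  assume "E' \<inter> S \<noteq> {0}"
  then obtain x where x: "x \<in> E'" "x \<in> S" "x \<noteq> 0"
    using subspace_nontrivial_iff[OF subspace_inter[OF assms(3,1)]] by blast
  define M where "M = S \<inter> span (E \<union> E')"
  have "subspace M"
    unfolding M_def by (simp add: assms(1) subspace_inter)
  have "E \<subseteq> M" "x \<in> M"
    using x assms(4) span_superset[of "E \<union> E'"] unfolding M_def by auto
  moreover have "x \<notin> E"
    using x assms(6) by blast
  ultimately have "span E \<subset> span M"
    using span_eq_iff[THEN iffD2, OF assms(2)] span_eq_iff[THEN iffD2, OF \<open>subspace M\<close>] by blast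
  then have "dim S \<le> dim M"
    using dim_psubset[of E M] assms(5) by simp
  then have "M = S"
    using subspace_dim_equal[OF \<open>subspace M\<close> assms(1)] unfolding M_def by blast
  then show "S \<subseteq> span (E \<union> E')"
    unfolding M_def by blast
next
  assume S: "S \<subseteq> span (E \<union> E')"
  have "span (E \<union> E') = {x + y |x y. x \<in> E \<and> y \<in> E'}"
    using span_Un[of E E'] span_eq_iff[THEN iffD2, OF assms(2)] span_eq_iff[THEN iffD2, OF assms(3)]
    by simp
  moreover have "dim (E \<inter> E') = 0"
    using assms(6) by simp
  ultimately have "dim (span (E \<union> E')) = dim E + dim E'"
    using dim_sums_Int[OF assms(2,3)] by (simp del: dim_eq_0)
  moreover have "E' \<subseteq> span (E \<union> E')"
    using span_superset by blast
  ultimately show "E' \<inter> S \<noteq> {0}"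
    using subspace_Int_nontrivial[OF assms(3,1) subspace_span _ S] assms(5) by simp
qed

end

lemma plane_nonzero: "plane E \<Longrightarrow> E \<noteq> {0}"
  unfolding plane_def by auto

lemma solids_Int_nontrivial:
  fixes S S' :: "('a::field ^ 'n) set"
  assumes "CARD('n) \<le> 7" "solid S" "solid S'"
  shows "S \<inter> S' \<noteq> {0}"
  using vec.subspace_Int_nontrivial[OF _ _ vec.subspace_UNIV, of S S'] assms
    vec_dim_card[where 'a='a and 'n='n]
  unfolding solid_def by simp

lemma kneser_adj_iff:
  assumes "flag23 (E, S)" "flag23 (E', S')"
  shows "kneser_adj (E, S) (E', S') \<longleftrightarrow> E \<inter> S' = {0} \<and> E' \<inter> S = {0}"
proof -
  have "E \<inter> S \<noteq> {0}"
    using assms(1) plane_nonzero unfolding flag23_def by (auto simp: Int_absorb2)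
  then show ?thesis
    using assms unfolding kneser_adj_def by auto
qed

lemma max_independent23_flag23: "max_independent23 C \<Longrightarrow> F \<in> C \<Longrightarrow> flag23 F"
  unfolding max_independent23_def independent23_def by blast

lemma kneser_adj_irrefl: "\<not> kneser_adj F F"
  unfolding kneser_adj_def by simp

lemma kneser_adj_sym: "kneser_adj F G \<Longrightarrow> kneser_adj G F"
  unfolding kneser_adj_def by auto

lemma max_independent23_mem_iff:
  assumes "max_independent23 C" "flag23 F"
  shows "F \<in> C \<longleftrightarrow> (\<forall>G\<in>C. \<not> kneser_adj F G)"
proof -
  have indep: "independent23 C" and maximal: "\<not> (\<exists>D. independent23 D \<and> C \<subset> D)"
    using assms(1) unfolding max_independent23_def by auto
  have "F \<in> C" if no_neighbour: "\<forall>G\<in>C. \<not> kneser_adj F G"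
  proof (rule ccontr)
    assume "F \<notin> C"
    then have "C \<subset> insert F C"
      by blast
    moreover have "independent23 (insert F C)"
      using indep assms(2) no_neighbour kneser_adj_irrefl kneser_adj_sym
      unfolding independent23_def by (metis insert_iff)
    ultimately show False
      using maximal by blast
  qed
  then show ?thesis
    using indep unfolding independent23_def by blast
qed

lemma max_independent23_flag_mem_iff:
  assumes "max_independent23 C" "flag23 (E, S)"
  shows "(E, S) \<in> C \<longleftrightarrow> (\<forall>E' S'. (E', S') \<in> C \<longrightarrow> E' \<inter> S = {0} \<longrightarrow> E \<inter> S' \<noteq> {0})"
proof -
  have nonadjacent_iff: "\<not> kneser_adj (E, S) (E', S') \<longleftrightarrow> (E' \<inter> S = {0} \<longrightarrow> E \<inter> S' \<noteq> {0})"
    if "(E', S') \<in> C" for E' S'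
    using kneser_adj_iff[OF assms(2) max_independent23_flag23[OF assms(1) that]] by auto
  show ?thesis
    unfolding max_independent23_mem_iff[OF assms] Ball_def split_paired_All
    by (simp add: nonadjacent_iff)
qed

lemma max_independent23_planes_on_solid:
  fixes C :: "(('a::field ^ 'n) set \<times> ('a ^ 'n) set) set"
  assumes "CARD('n) \<le> 7" "max_independent23 C" "solid S"
  shows "\<exists>U. psubspace U \<and> U \<subseteq> S \<and>
           (\<forall>E. plane E \<and> E \<subseteq> S \<longrightarrow> ((E, S) \<in> C \<longleftrightarrow> U \<subseteq> E))"
proof -
  define points where
    "points = {S \<inter> S' | E' S'. (E', S') \<in> C \<and> E' \<inter> S = {0} \<and> vec.dim (S \<inter> S') = 1}"
  define U where "U = vec.span (\<Union>points)"
  have S: "vec.subspace S" "vec.dim S = 4"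
    using assms(3) unfolding solid_def by auto
  have "psubspace U"
    unfolding psubspace_def U_def by (rule vec.subspace_span)
  moreover have "\<Union>points \<subseteq> S"
    unfolding points_def by blast
  then have "U \<subseteq> S"
    unfolding U_def using S(1) by (rule vec.span_minimal)
  moreover have "(E, S) \<in> C \<longleftrightarrow> U \<subseteq> E" if E: "plane E" "E \<subseteq> S" for E
  proof -
    have "vec.subspace E" "vec.dim S = vec.dim E + 1"
      using E(1) S(2) unfolding plane_def by auto
    have meets: "E \<inter> S' \<noteq> {0} \<longleftrightarrow> (vec.dim (S \<inter> S') = 1 \<longrightarrow> S \<inter> S' \<subseteq> E)"
      if "(E', S') \<in> C" for E' S'
    proof -
      have "solid S'"
        using max_independent23_flag23[OF assms(2) that] unfolding flag23_def by simp
      then have "S \<inter> S' \<noteq> {0}"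
        by (rule solids_Int_nontrivial[OF assms(1,3)])
      moreover have "vec.subspace (S \<inter> S')"
        using S(1) \<open>solid S'\<close> vec.subspace_inter unfolding solid_def by blast
      moreover have "E \<inter> S' = E \<inter> (S \<inter> S')"
        using E(2) by blast
      ultimately show ?thesis
        using vec.hyperplane_Int_nontrivial_iff[OF S(1) \<open>vec.subspace E\<close> _ E(2) Int_lower1
            \<open>vec.dim S = vec.dim E + 1\<close>]
        by simp
    qed
    have "flag23 (E, S)"
      unfolding flag23_def using E assms(3) by simp
    then have "(E, S) \<in> C \<longleftrightarrow> (\<forall>E' S'. (E', S') \<in> C \<longrightarrow> E' \<inter> S = {0} \<longrightarrow>
                   vec.dim (S \<inter> S') = 1 \<longrightarrow> S \<inter> S' \<subseteq> E)"
      using max_independent23_flag_mem_iff[OF assms(2)] by (simp add: meets)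
    also have "\<dots> \<longleftrightarrow> \<Union>points \<subseteq> E"
      by (auto simp: points_def)
    also have "\<dots> \<longleftrightarrow> U \<subseteq> E"
      using vec.span_minimal[of "\<Union>points" E] vec.span_superset[of "\<Union>points"]
        \<open>vec.subspace E\<close>
      unfolding U_def by blast
    finally show ?thesis .
  qed
  ultimately show ?thesis
    by blast
qed

lemma max_independent23_solids_on_plane:
  fixes C :: "(('a::field ^ 'n) set \<times> ('a ^ 'n) set) set"
  assumes "max_independent23 C" "plane E"
  shows "\<exists>U. psubspace U \<and> E \<subseteq> U \<and>
           (\<forall>S. solid S \<and> E \<subseteq> S \<longrightarrow> ((E, S) \<in> C \<longleftrightarrow> S \<subseteq> U))"
proof -
  define U where "U = \<Inter>{vec.span (E \<union> E') | E' S'. (E', S') \<in> C \<and> E \<inter> S' = {0}}"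
  have "psubspace U"
    unfolding psubspace_def U_def by (rule vec.subspace_Inter) (auto intro: vec.subspace_span)
  moreover have "E \<subseteq> U"
    unfolding U_def by (rule Inter_greatest) (auto intro: vec.span_base)
  moreover have "(E, S) \<in> C \<longleftrightarrow> S \<subseteq> U" if S: "solid S" "E \<subseteq> S" for S
  proof -
    have E: "vec.subspace E" "vec.dim S = vec.dim E + 1"
      using assms(2) S(1) unfolding plane_def solid_def by auto
    have meets: "(E' \<inter> S = {0} \<longrightarrow> E \<inter> S' \<noteq> {0}) \<longleftrightarrow>
        (E \<inter> S' = {0} \<longrightarrow> S \<subseteq> vec.span (E \<union> E'))"
      if "(E', S') \<in> C" for E' S'
    proof (cases "E \<inter> S' = {0}")
      case True
      have "plane E'" "E' \<subseteq> S'"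
        using max_independent23_flag23[OF assms(1) that] unfolding flag23_def by auto
      have "E \<inter> E' \<subseteq> E \<inter> S'"
        using \<open>E' \<subseteq> S'\<close> by blast
      then have "E \<inter> E' \<subseteq> {0}"
        using True by simp
      moreover have "vec.subspace E'"
        using \<open>plane E'\<close> unfolding plane_def by simp
      moreover have "vec.subspace S"
        using S(1) unfolding solid_def by simp
      ultimately have "E' \<inter> S \<noteq> {0} \<longleftrightarrow> S \<subseteq> vec.span (E \<union> E')"
        using vec.Int_nontrivial_iff_subset_span_Un[OF _ E(1) _ S(2) E(2)] by simp
      then show ?thesis
        using True by simp
    qed simp
    have "flag23 (E, S)"
      unfolding flag23_def using S assms(2) by simp
    then have "(E, S) \<in> C \<longleftrightarrow> (\<forall>E' S'. (E', S') \<in> C \<longrightarrow> E \<inter> S' = {0} \<longrightarrow>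
                   S \<subseteq> vec.span (E \<union> E'))"
      using max_independent23_flag_mem_iff[OF assms(1)] by (simp add: meets)
    also have "\<dots> \<longleftrightarrow> S \<subseteq> U"
      by (auto simp: U_def)
    finally show ?thesis .
  qed
  ultimately show ?thesis
    by blast
qed

theorem lemma6p1:
  fixes C :: "(('a::{field,finite} ^ 'n) set \<times> ('a ^ 'n) set) set"
  assumes "CARD('n) = 7"
    and "max_independent23 C"
  shows "(\<forall>S. solid S \<longrightarrow> (\<exists>U. psubspace U \<and> U \<subseteq> S \<and>
            (\<forall>E. plane E \<and> E \<subseteq> S \<longrightarrow> ((E, S) \<in> C \<longleftrightarrow> U \<subseteq> E))))
       \<and> (\<forall>E. plane E \<longrightarrow> (\<exists>U. psubspace U \<and> E \<subseteq> U \<and>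
            (\<forall>S. solid S \<and> E \<subseteq> S \<longrightarrow> ((E, S) \<in> C \<longleftrightarrow> S \<subseteq> U))))"
  using max_independent23_planes_on_solid[of C] max_independent23_solids_on_plane[OF assms(2)]
    assms by simp

end
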